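(* Let $x\in\mathbb{R}$ be a Diophantine number, let $r=e^{i2\pi x}$ and $\varphi_r(z)=rz$ for $z\in\mathbb{D}$. Then $1\notin\sigma(C_{\varphi_r}, H_0(\mathbb{D}))$. In particular $1\in\sigma^*(C_{\varphi_r}, H_0(\mathbb{D}))\setminus\sigma(C_{\varphi_r}, H_0(\mathbb{D}))$.
   Context: A real number $x$ is Diophantine if there are $\delta\ge 1$ and $c(x)>0$ such that $|x-p/q|\ge c(x)/q^{1+\delta}$ for all rational numbers $p/q$ (with $p\in\mathbb{Z}$, $q\in\mathbb{N}$). $\mathbb{D}$ is the open unit disc; $H_0(\mathbb{D})$ is the Fréchet space of analytic functions $f$ on $\mathbb{D}$ with $f(0)=0$, with the topology of uniform convergence on compact subsets; $C_{\varphi_r}f=f\circ\varphi_r$. For a continuous linear operator $T$ on a Fréchet space $X$: $\rho(T;X)$ is the set of $\lambda$ with $\lambda I-T$ bijective with continuous inverse $R(\lambda,T)$, and $\sigma(T;X)=\mathbb{C}\setminus\rho(T;X)$; $\rho^*(T;X)$ is the set of $\lambda$ having some $\delta>0$ with $\{|\mu-\lambda|<\delta\}\subseteq\rho(T;X)$ and $\{R(\mu,T):|\mu-\lambda|<\delta\}$ equicontinuous, and $\sigma^*(T;X)=\mathbb{C}\setminus\rho^*(T;X)$ (Waelbroeck spectrum). *)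

theory Defs
  imports "HOL-Analysis.Analysis"
begin

definition diophantine :: "real \<Rightarrow> bool" where
  "diophantine x \<longleftrightarrow> (\<exists>\<delta>::real. \<delta> \<ge> 1 \<and> (\<exists>c::real. c > 0 \<and>
     (\<forall>(p::int) (q::nat). q > 0 \<longrightarrow> \<bar>x - real_of_int p / real q\<bar> \<ge> c / real q powr (1 + \<delta>))))"

text \<open>H_0(D): holomorphic on the unit disc, vanishing at 0; normalised to be 0 off the disc
  so that elements are determined by their values on the disc.\<close>
definition H0 :: "(complex \<Rightarrow> complex) set" where
  "H0 = {f. f holomorphic_on ball 0 1 \<and> f 0 = 0 \<and> (\<forall>z. z \<notin> ball 0 1 \<longrightarrow> f z = 0)}"

definition H0_seminorm :: "real \<Rightarrow> (complex \<Rightarrow> complex) \<Rightarrow> real" where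
  "H0_seminorm \<rho> f = (SUP z\<in>cball 0 \<rho>. cmod (f z))"

definition H0_continuous :: "((complex \<Rightarrow> complex) \<Rightarrow> (complex \<Rightarrow> complex)) \<Rightarrow> bool" where
  "H0_continuous S \<longleftrightarrow> (\<forall>\<rho>. 0 \<le> \<rho> \<and> \<rho> < 1 \<longrightarrow> (\<exists>\<sigma> C. 0 \<le> \<sigma> \<and> \<sigma> < 1 \<and> 0 \<le> C \<and>
      (\<forall>f\<in>H0. H0_seminorm \<rho> (S f) \<le> C * H0_seminorm \<sigma> f)))"

definition H0_equicontinuous :: "((complex \<Rightarrow> complex) \<Rightarrow> (complex \<Rightarrow> complex)) set \<Rightarrow> bool" where
  "H0_equicontinuous \<S> \<longleftrightarrow> (\<forall>\<rho>. 0 \<le> \<rho> \<and> \<rho> < 1 \<longrightarrow> (\<exists>\<sigma> C. 0 \<le> \<sigma> \<and> \<sigma> < 1 \<and> 0 \<le> C \<and>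
      (\<forall>S\<in>\<S>. \<forall>f\<in>H0. H0_seminorm \<rho> (S f) \<le> C * H0_seminorm \<sigma> f)))"

definition shift_op :: "complex \<Rightarrow> ((complex \<Rightarrow> complex) \<Rightarrow> (complex \<Rightarrow> complex))
    \<Rightarrow> (complex \<Rightarrow> complex) \<Rightarrow> (complex \<Rightarrow> complex)" where
  "shift_op mu T = (\<lambda>f z. mu * f z - T f z)"

definition H0_resolvent :: "((complex \<Rightarrow> complex) \<Rightarrow> (complex \<Rightarrow> complex)) \<Rightarrow> complex
    \<Rightarrow> (complex \<Rightarrow> complex) \<Rightarrow> (complex \<Rightarrow> complex)" where
  "H0_resolvent T mu = inv_into H0 (shift_op mu T)"

definition H0_resolvent_set :: "((complex \<Rightarrow> complex) \<Rightarrow> (complex \<Rightarrow> complex)) \<Rightarrow> complex set" where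
  "H0_resolvent_set T = {mu. bij_betw (shift_op mu T) H0 H0 \<and> H0_continuous (H0_resolvent T mu)}"

definition H0_spectrum :: "((complex \<Rightarrow> complex) \<Rightarrow> (complex \<Rightarrow> complex)) \<Rightarrow> complex set" where
  "H0_spectrum T = - H0_resolvent_set T"

definition H0_waelbroeck_resolvent_set :: "((complex \<Rightarrow> complex) \<Rightarrow> (complex \<Rightarrow> complex)) \<Rightarrow> complex set" where
  "H0_waelbroeck_resolvent_set T = {mu. \<exists>\<delta>>0. ball mu \<delta> \<subseteq> H0_resolvent_set T \<and>
      H0_equicontinuous (H0_resolvent T ` ball mu \<delta>)}"

definition H0_waelbroeck_spectrum :: "((complex \<Rightarrow> complex) \<Rightarrow> (complex \<Rightarrow> complex)) \<Rightarrow> complex set" where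
  "H0_waelbroeck_spectrum T = - H0_waelbroeck_resolvent_set T"

definition comp_rot :: "complex \<Rightarrow> (complex \<Rightarrow> complex) \<Rightarrow> (complex \<Rightarrow> complex)" where
  "comp_rot r f = (\<lambda>z. f (r * z))"

end

theory Submission
  imports Defs "HOL-Complex_Analysis.Complex_Analysis"
begin

text \<open>In Taylor coefficients the operator \<open>f \<mapsto> f - f \<circ> \<phi>\<^sub>r\<close> is diagonal: it multiplies the
  \<open>n\<close>-th coefficient by \<open>1 - r\<^sup>n\<close>. Writing \<open>1 - r\<^sup>n\<close> through \<open>sin (\<pi> (n x - p))\<close>, the Diophantine
  condition bounds these small divisors below by \<open>K / n\<^sup>d\<close>. Dividing the coefficients back
  therefore loses only a polynomial factor \<open>n\<^sup>d\<close>, which the Cauchy estimates on a slightly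
  larger disc absorb into a geometric factor \<open>(\<rho>/\<sigma>)\<^sup>n\<close>: the inverse exists and is continuous.
  On the other hand \<open>z\<^sup>n\<close> is an eigenfunction of \<open>C\<^sub>\<phi>\<^sub>r\<close> for the eigenvalue \<open>r\<^sup>n\<close>, and by
  Dirichlet's approximation theorem these eigenvalues accumulate at \<open>1\<close>, so no neighbourhood
  of \<open>1\<close> lies in the resolvent set.\<close>

lemma norm_1_minus_exp_2pi_power:
  fixes x :: real and p :: int
  shows "cmod (1 - exp (\<i> * of_real (2 * pi * x)) ^ n) = 2 * \<bar>sin (pi * (real n * x - of_int p))\<bar>"
proof -
  have "exp (\<i> * of_real (2 * pi * x)) ^ n = exp (\<i> * of_real (2 * pi * (real n * x - of_int p)))"
    by (simp add: exp_of_nat_mult[symmetric] exp_diff right_diff_distrib mult_ac)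
  then show ?thesis
    using dist_exp_i_1[of "2 * pi * (real n * x - of_int p)"] by (simp add: norm_minus_commute)
qed

lemma abs_le_abs_sin_pi_times:
  fixes t :: real
  assumes "\<bar>t\<bar> \<le> 1/2"
  shows "\<bar>t\<bar> \<le> \<bar>sin (pi * t)\<bar>"
proof -
  define y where "y = pi * \<bar>t\<bar>"
  have y: "0 \<le> y" "y \<le> 2"
    using mult_mono[OF less_imp_le[OF pi_less_4] assms] by (auto simp: y_def)
  have "\<bar>sin y - y\<bar> \<le> y ^ 3 / 6"
    using Maclaurin_sin_bound[of y 3] y by (simp add: eval_nat_numeral sin_coeff_def)
  then have "y - y ^ 3 / 6 \<le> sin y" by linarith
  moreover have "\<bar>t\<bar> \<le> y - y ^ 3 / 6"
  proof -
    have "y * y \<le> 2 * 2" using y by (intro mult_mono) auto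
    then have "y ^ 3 / 6 \<le> y * 4 / 6"
      using mult_left_mono[OF _ y(1)] by (simp add: power3_eq_cube mult.commute[of 4])
    moreover have "3 * \<bar>t\<bar> \<le> y" using pi_gt3 by (simp add: y_def mult_right_mono)
    ultimately show ?thesis by linarith
  qed
  moreover have "\<bar>sin (pi * t)\<bar> = sin y"
    using y assms sin_ge_zero[of y] pi_gt3 by (cases "t \<ge> 0") (auto simp: y_def)
  ultimately show ?thesis by linarith
qed

lemma diophantine_small_divisors:
  assumes "diophantine x"
  obtains d K where "0 < K"
    and "\<And>n. 1 \<le> n \<Longrightarrow> K / real n powr d \<le> cmod (1 - exp (\<i> * of_real (2 * pi * x)) ^ n)"
proof -
  obtain \<delta> c where "0 < c"
    and dio: "\<And>(p::int) (q::nat). 0 < q \<Longrightarrow> c / real q powr (1 + \<delta>) \<le> \<bar>x - of_int p / real q\<bar>"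
    using assms unfolding diophantine_def by blast
  have "c / real n powr \<delta> \<le> cmod (1 - exp (\<i> * of_real (2 * pi * x)) ^ n)" if "1 \<le> n" for n
  proof -
    define p where "p = round (real n * x)"
    have n: "0 < real n" using that by simp
    have "c / real n powr \<delta> = real n * (c / real n powr (1 + \<delta>))"
      using n by (simp add: powr_add field_simps)
    also have "\<dots> \<le> real n * \<bar>x - of_int p / real n\<bar>"
      using dio[of n p] n by (intro mult_left_mono) auto
    also have "\<dots> = \<bar>real n * x - of_int p\<bar>"
      using n by (simp add: abs_mult[symmetric] field_simps)
    also have "\<dots> \<le> \<bar>sin (pi * (real n * x - of_int p))\<bar>"
      using of_int_round_abs_le[of "real n * x"]
      by (intro abs_le_abs_sin_pi_times) (simp add: p_def abs_minus_commute)
    also have "\<dots> \<le> cmod (1 - exp (\<i> * of_real (2 * pi * x)) ^ n)"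
      using norm_1_minus_exp_2pi_power[of x n p] by simp
    finally show ?thesis .
  qed
  with \<open>0 < c\<close> show thesis by (rule that)
qed

lemma exp_2pi_powers_approach_1:
  assumes "0 < e"
  obtains n where "1 \<le> n" "cmod (1 - exp (\<i> * of_real (2 * pi * x)) ^ n) < e"
proof -
  define N :: nat where "N = nat \<lceil>2 * pi / e\<rceil> + 1"
  have "0 < N" "2 * pi / e < real N" unfolding N_def by linarith+
  then obtain p k where k: "0 < k" "\<bar>of_int k * x - of_int p\<bar> < 1 / N"
    using Dirichlet_approx[of N x] by blast
  have "cmod (1 - exp (\<i> * of_real (2 * pi * x)) ^ nat k)
      = 2 * \<bar>sin (pi * (of_int k * x - of_int p))\<bar>"
    using norm_1_minus_exp_2pi_power[of x "nat k" p] k(1) by simp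
  also have "\<dots> \<le> 2 * pi * \<bar>of_int k * x - of_int p\<bar>"
    using abs_sin_x_le_abs_x[of "pi * (of_int k * x - of_int p)"] by (simp add: abs_mult)
  also have "\<dots> < 2 * pi * (1 / N)"
    using k(2) by (intro mult_strict_left_mono) auto
  also have "\<dots> < e"
    using \<open>2 * pi / e < real N\<close> \<open>0 < N\<close> assms by (simp add: field_simps)
  finally show thesis using k(1) by (intro that[of "nat k"]) auto
qed

lemma summable_powr_times_geometric:
  fixes q :: real
  assumes "0 \<le> q" "q < 1"
  shows "summable (\<lambda>n. real n powr d * q ^ n)"
proof (rule root_test_convergence)
  have "root n (norm (real n powr d * q ^ n)) = root n (real n) powr d * q" if "1 \<le> n" for n
  proof -
    have "root n (real n powr d) = root n (real n) powr d"
      using that by (simp add: root_powr_inverse powr_powr mult.commute)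
    moreover have "root n (q ^ n) = q"
      using that assms by (simp add: real_root_power_cancel)
    ultimately show ?thesis
      using assms by (simp add: real_root_mult)
  qed
  then have "\<forall>\<^sub>F n in sequentially. root n (real n) powr d * q = root n (norm (real n powr d * q ^ n))"
    unfolding eventually_sequentially by metis
  moreover have "(\<lambda>n. root n (real n) powr d * q) \<longlonglongrightarrow> 1 powr d * q"
    by (intro tendsto_intros LIMSEQ_root) auto
  ultimately show "(\<lambda>n. root n (norm (real n powr d * q ^ n))) \<longlonglongrightarrow> q"
    using Lim_transform_eventually by fastforce
  show "q < 1" by fact
qed

definition taylor_coeff :: "(complex \<Rightarrow> complex) \<Rightarrow> nat \<Rightarrow> complex" where
  "taylor_coeff f n = (deriv ^^ n) f 0 / fact n"

lemma H0_sums_taylor: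
  assumes "f \<in> H0" "z \<in> ball 0 1"
  shows "(\<lambda>n. taylor_coeff f n * z ^ n) sums f z"
  using holomorphic_power_series[of f 0 1 z] assms by (simp add: H0_def taylor_coeff_def)

lemma H0_taylor_coeff_0: "f \<in> H0 \<Longrightarrow> taylor_coeff f 0 = 0"
  by (simp add: H0_def taylor_coeff_def)

lemma norm_le_H0_seminorm:
  assumes "f \<in> H0" "\<sigma> < 1" "z \<in> cball 0 \<sigma>"
  shows "cmod (f z) \<le> H0_seminorm \<sigma> f"
proof -
  have "cball 0 \<sigma> \<subseteq> ball (0::complex) 1" using assms(2) by auto
  then have "compact (f ` cball 0 \<sigma>)"
    using assms(1) unfolding H0_def
    by (intro compact_continuous_image holomorphic_on_imp_continuous_on) (auto elim: holomorphic_on_subset)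
  then have "bdd_above ((\<lambda>z. cmod (f z)) ` cball 0 \<sigma>)"
    by (auto dest: compact_imp_bounded simp: bounded_iff bdd_above_def)
  then show ?thesis
    unfolding H0_seminorm_def using assms(3) by (rule cSUP_upper2) simp
qed

lemma H0_seminorm_nonneg:
  assumes "f \<in> H0" "0 \<le> \<sigma>" "\<sigma> < 1"
  shows "0 \<le> H0_seminorm \<sigma> f"
  using norm_le_H0_seminorm[OF assms(1,3), of 0] assms by (simp add: H0_def)

lemma H0_seminorm_le:
  assumes "0 \<le> \<rho>" "\<And>z. z \<in> cball 0 \<rho> \<Longrightarrow> cmod (f z) \<le> B"
  shows "H0_seminorm \<rho> f \<le> B"
  unfolding H0_seminorm_def using assms by (intro cSUP_least) auto

lemma norm_taylor_coeff_le:
  assumes "f \<in> H0" "0 < \<sigma>" "\<sigma> < 1"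
  shows "cmod (taylor_coeff f n) \<le> H0_seminorm \<sigma> f / \<sigma> ^ n"
proof -
  have holo: "f holomorphic_on ball 0 1" using assms(1) by (simp add: H0_def)
  have sub: "cball 0 \<sigma> \<subseteq> ball (0::complex) 1" using assms(3) by auto
  have "cmod ((deriv ^^ n) f 0) \<le> fact n * H0_seminorm \<sigma> f / \<sigma> ^ n"
  proof (rule Cauchy_inequality)
    show "f holomorphic_on ball 0 \<sigma>"
      using holo sub ball_subset_cball by (blast intro: holomorphic_on_subset)
    show "continuous_on (cball 0 \<sigma>) f"
      using holo sub by (blast intro: holomorphic_on_imp_continuous_on holomorphic_on_subset)
    show "cmod (f z) \<le> H0_seminorm \<sigma> f" if "cmod (0 - z) = \<sigma>" for z
      using that assms by (intro norm_le_H0_seminorm) auto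
  qed (use assms in auto)
  then show ?thesis by (simp add: taylor_coeff_def norm_divide field_simps)
qed

lemma comp_rot_in_H0:
  assumes "cmod r = 1" "f \<in> H0"
  shows "comp_rot r f \<in> H0"
proof -
  have "f \<circ> (\<lambda>z. r * z) holomorphic_on ball 0 1"
    using assms by (intro holomorphic_on_compose_gen[where t="ball 0 1"] holomorphic_intros)
      (auto simp: H0_def norm_mult)
  then show ?thesis
    using assms by (auto simp: H0_def comp_rot_def o_def norm_mult)
qed

lemma shift_op_in_H0:
  assumes "f \<in> H0" "T f \<in> H0"
  shows "shift_op \<mu> T f \<in> H0"
  using assms by (auto simp: H0_def shift_op_def intro!: holomorphic_intros)

lemma taylor_coeff_shift_op_comp_rot:
  assumes "cmod r = 1" "f \<in> H0"
  shows "taylor_coeff (shift_op \<mu> (comp_rot r) f) n = (\<mu> - r ^ n) * taylor_coeff f n"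
proof -
  have holo: "f holomorphic_on ball 0 1" "comp_rot r f holomorphic_on ball 0 1"
    using assms comp_rot_in_H0 by (auto simp: H0_def)
  have "(deriv ^^ n) (\<lambda>z. \<mu> * f z - comp_rot r f z) 0
      = \<mu> * (deriv ^^ n) f 0 - (deriv ^^ n) (\<lambda>z. f (r * z)) 0"
    unfolding comp_rot_def
    by (subst higher_deriv_diff, use holo in \<open>auto intro!: holomorphic_intros simp: comp_rot_def\<close>)
      (simp add: higher_deriv_cmult[OF holo(1)])
  also have "(deriv ^^ n) (\<lambda>z. f (r * z)) 0 = r ^ n * (deriv ^^ n) f 0"
    using higher_deriv_compose_linear[OF holo(1), of "ball 0 1" 0 r n] assms(1)
    by (simp add: norm_mult)
  finally show ?thesis
    by (simp add: taylor_coeff_def shift_op_def algebra_simps)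
qed

lemma power_notin_H0_resolvent_set:
  assumes "cmod r = 1" "1 \<le> n"
  shows "r ^ n \<notin> H0_resolvent_set (comp_rot r)"
proof
  define p :: "complex \<Rightarrow> complex" where "p z = (if z \<in> ball 0 1 then z ^ n else 0)" for z
  assume "r ^ n \<in> H0_resolvent_set (comp_rot r)"
  then have inj: "inj_on (shift_op (r ^ n) (comp_rot r)) H0"
    by (simp add: H0_resolvent_set_def bij_betw_def)
  have "p holomorphic_on ball 0 1"
    by (rule holomorphic_transform[of "\<lambda>z. z ^ n"]) (auto simp: p_def intro: holomorphic_intros)
  then have "p \<in> H0" using assms(2) by (simp add: H0_def p_def)
  moreover have "(\<lambda>_. 0) \<in> H0" by (simp add: H0_def)
  moreover have "shift_op (r ^ n) (comp_rot r) p = shift_op (r ^ n) (comp_rot r) (\<lambda>_. 0)"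
    using assms(1) by (auto simp: shift_op_def comp_rot_def p_def norm_mult power_mult_distrib)
  ultimately have "p = (\<lambda>_. 0)" using inj by (blast dest: inj_onD)
  then have "p (1/2) = 0" by simp
  then show False by (simp add: p_def)
qed

lemma one_in_H0_waelbroeck_spectrum_rotation:
  "1 \<in> H0_waelbroeck_spectrum (comp_rot (exp (\<i> * of_real (2 * pi * x))))"
proof -
  define r where "r = exp (\<i> * of_real (2 * pi * x))"
  have "\<not> ball 1 e \<subseteq> H0_resolvent_set (comp_rot r)" if "0 < e" for e
  proof -
    obtain n where "1 \<le> n" "cmod (1 - r ^ n) < e"
      using exp_2pi_powers_approach_1[OF \<open>0 < e\<close>] unfolding r_def by blast
    moreover have "cmod r = 1" by (simp add: r_def)
    ultimately show ?thesis
      using power_notin_H0_resolvent_set by (auto simp: dist_norm)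
  qed
  then show ?thesis
    by (auto simp: H0_waelbroeck_spectrum_def H0_waelbroeck_resolvent_set_def r_def)
qed

locale small_divisor_rotation =
  fixes r :: complex and d K :: real
  assumes norm_r: "cmod r = 1"
    and K_pos: "0 < K"
    and small_divisor_bound: "\<And>n. 1 \<le> n \<Longrightarrow> K / real n powr d \<le> cmod (1 - r ^ n)"
begin

lemma power_neq_1: "1 \<le> n \<Longrightarrow> r ^ n \<noteq> 1"
  using small_divisor_bound[of n] K_pos by (auto simp: divide_le_0_iff)

lemma taylor_coeff_divide_times_cancel:
  assumes "g \<in> H0"
  shows "taylor_coeff g n / (1 - r ^ n) * (1 - r ^ n) = taylor_coeff g n"
  using power_neq_1[of n] H0_taylor_coeff_0[OF assms] by (cases "n = 0") auto

lemma norm_small_divisor_term_le: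
  assumes "g \<in> H0" "0 \<le> \<rho>" "\<rho> < \<sigma>" "\<sigma> < 1" "cmod w \<le> \<rho>"
  shows "cmod (taylor_coeff g n / (1 - r ^ n) * w ^ n)
    \<le> H0_seminorm \<sigma> g / K * (real n powr d * (\<rho> / \<sigma>) ^ n)"
proof (cases "n = 0")
  case False
  have \<sigma>: "0 < \<sigma>" using assms by linarith
  have "0 < cmod (1 - r ^ n)" using power_neq_1[of n] False by simp
  then have inverse_le: "1 / cmod (1 - r ^ n) \<le> real n powr d / K"
    using small_divisor_bound[of n] False K_pos by (simp add: field_simps)
  have "cmod (taylor_coeff g n / (1 - r ^ n) * w ^ n)
      = cmod (taylor_coeff g n) * (1 / cmod (1 - r ^ n)) * cmod w ^ n"
    by (simp add: norm_divide norm_mult norm_power)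
  also have "\<dots> \<le> H0_seminorm \<sigma> g / \<sigma> ^ n * (real n powr d / K) * \<rho> ^ n"
    using assms \<sigma> K_pos inverse_le H0_seminorm_nonneg[OF assms(1), of \<sigma>]
    by (intro mult_mono norm_taylor_coeff_le power_mono) auto
  also have "\<dots> = H0_seminorm \<sigma> g / K * (real n powr d * (\<rho> / \<sigma>) ^ n)"
    by (simp add: power_divide mult_ac)
  finally show ?thesis .
qed simp

text \<open>The \<open>n = 0\<close> term vanishes because division by \<open>1 - r\<^sup>0 = 0\<close> yields \<open>0\<close>.\<close>

definition cohomological_solution :: "(complex \<Rightarrow> complex) \<Rightarrow> complex \<Rightarrow> complex" where
  "cohomological_solution g z =
    (if z \<in> ball 0 1 then \<Sum>n. taylor_coeff g n / (1 - r ^ n) * z ^ n else 0)"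

lemma cohomological_series_bound:
  assumes "g \<in> H0" "0 \<le> \<rho>" "\<rho> < \<sigma>" "\<sigma> < 1" "cmod z \<le> \<rho>"
  shows "summable (\<lambda>n. taylor_coeff g n / (1 - r ^ n) * z ^ n)"
    and "cmod (\<Sum>n. taylor_coeff g n / (1 - r ^ n) * z ^ n)
      \<le> H0_seminorm \<sigma> g / K * (\<Sum>n. real n powr d * (\<rho> / \<sigma>) ^ n)"
proof -
  have "summable (\<lambda>n. real n powr d * (\<rho> / \<sigma>) ^ n)"
    using assms by (intro summable_powr_times_geometric) auto
  then have majorant: "summable (\<lambda>n. H0_seminorm \<sigma> g / K * (real n powr d * (\<rho> / \<sigma>) ^ n))"
    by (rule summable_mult)
  show "summable (\<lambda>n. taylor_coeff g n / (1 - r ^ n) * z ^ n)"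
    using majorant norm_small_divisor_term_le[OF assms] by (rule summable_comparison_test')
  have "cmod (\<Sum>n. taylor_coeff g n / (1 - r ^ n) * z ^ n)
      \<le> (\<Sum>n. H0_seminorm \<sigma> g / K * (real n powr d * (\<rho> / \<sigma>) ^ n))"
    using norm_small_divisor_term_le[OF assms] majorant by (rule norm_suminf_le)
  also have "\<dots> = H0_seminorm \<sigma> g / K * (\<Sum>n. real n powr d * (\<rho> / \<sigma>) ^ n)"
    using \<open>summable (\<lambda>n. real n powr d * (\<rho> / \<sigma>) ^ n)\<close> by (rule suminf_mult)
  finally show "cmod (\<Sum>n. taylor_coeff g n / (1 - r ^ n) * z ^ n)
      \<le> H0_seminorm \<sigma> g / K * (\<Sum>n. real n powr d * (\<rho> / \<sigma>) ^ n)" .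
qed

lemma cohomological_solution_sums:
  assumes "g \<in> H0" "z \<in> ball 0 1"
  shows "(\<lambda>n. taylor_coeff g n / (1 - r ^ n) * z ^ n) sums cohomological_solution g z"
proof -
  have "summable (\<lambda>n. taylor_coeff g n / (1 - r ^ n) * z ^ n)"
    using assms by (intro cohomological_series_bound[of g "cmod z" "(1 + cmod z) / 2"]) auto
  then show ?thesis
    using assms(2) by (simp add: cohomological_solution_def summable_sums)
qed

lemma cohomological_solution_in_H0:
  assumes "g \<in> H0"
  shows "cohomological_solution g \<in> H0"
proof -
  have "cohomological_solution g holomorphic_on ball 0 1"
    using cohomological_solution_sums[OF assms]
    by (intro power_series_holomorphic[where a = "\<lambda>n. taylor_coeff g n / (1 - r ^ n)"]) simp
  moreover have "cohomological_solution g 0 = 0"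
    using cohomological_solution_sums[OF assms, of 0] by (simp only: powser_sums_zero_iff) simp
  ultimately show ?thesis
    by (simp add: H0_def cohomological_solution_def)
qed

lemma shift_op_cohomological_solution:
  assumes "g \<in> H0"
  shows "shift_op 1 (comp_rot r) (cohomological_solution g) = g"
proof (rule ext)
  fix z
  show "shift_op 1 (comp_rot r) (cohomological_solution g) z = g z"
  proof (cases "z \<in> ball 0 1")
    case True
    then have "r * z \<in> ball 0 1" by (simp add: norm_mult norm_r)
    have "(\<lambda>n. taylor_coeff g n / (1 - r ^ n) * z ^ n - taylor_coeff g n / (1 - r ^ n) * (r * z) ^ n)
        sums (cohomological_solution g z - cohomological_solution g (r * z))"
      using cohomological_solution_sums[OF assms True]
        cohomological_solution_sums[OF assms \<open>r * z \<in> ball 0 1\<close>] by (rule sums_diff)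
    moreover have "taylor_coeff g n / (1 - r ^ n) * z ^ n - taylor_coeff g n / (1 - r ^ n) * (r * z) ^ n
        = taylor_coeff g n * z ^ n" for n
    proof -
      have "q * z ^ n - q * (r * z) ^ n = q * (1 - r ^ n) * z ^ n" for q
        by (simp add: power_mult_distrib algebra_simps)
      then show ?thesis by (simp only: taylor_coeff_divide_times_cancel[OF assms])
    qed
    ultimately have "(\<lambda>n. taylor_coeff g n * z ^ n)
        sums (cohomological_solution g z - cohomological_solution g (r * z))" by simp
    then show ?thesis
      using H0_sums_taylor[OF assms True] sums_unique2
      by (fastforce simp: shift_op_def comp_rot_def)
  next
    case False
    then have "r * z \<notin> ball 0 1" by (simp add: norm_mult norm_r)
    then show ?thesis
      using False assms by (simp add: shift_op_def comp_rot_def cohomological_solution_def H0_def)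
  qed
qed

lemma cohomological_solution_shift_op:
  assumes "f \<in> H0"
  shows "cohomological_solution (shift_op 1 (comp_rot r) f) = f"
proof (rule ext)
  fix z
  have coeff: "taylor_coeff (shift_op 1 (comp_rot r) f) n / (1 - r ^ n) = taylor_coeff f n" for n
    using power_neq_1[of n] H0_taylor_coeff_0[OF assms]
    by (cases "n = 0") (simp_all add: taylor_coeff_shift_op_comp_rot[OF norm_r assms])
  show "cohomological_solution (shift_op 1 (comp_rot r) f) z = f z"
  proof (cases "z \<in> ball 0 1")
    case True
    then show ?thesis
      using H0_sums_taylor[OF assms True]
      by (simp add: cohomological_solution_def coeff sums_iff)
  next
    case False
    then show ?thesis using assms by (simp add: cohomological_solution_def H0_def)
  qed
qed

lemma bij_betw_shift_op_1_comp_rot: "bij_betw (shift_op 1 (comp_rot r)) H0 H0"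
  by (rule bij_betw_byWitness[where f' = cohomological_solution])
    (auto simp: cohomological_solution_shift_op shift_op_cohomological_solution
      cohomological_solution_in_H0 shift_op_in_H0 comp_rot_in_H0 norm_r)

lemma H0_resolvent_1_eq:
  assumes "g \<in> H0"
  shows "H0_resolvent (comp_rot r) 1 g = cohomological_solution g"
  unfolding H0_resolvent_def
  using bij_betw_shift_op_1_comp_rot assms
  by (intro inv_into_f_eq) (auto simp: bij_betw_def cohomological_solution_in_H0
      shift_op_cohomological_solution)

lemma H0_continuous_resolvent_1: "H0_continuous (H0_resolvent (comp_rot r) 1)"
  unfolding H0_continuous_def
proof (intro allI impI)
  fix \<rho> :: real
  assume \<rho>: "0 \<le> \<rho> \<and> \<rho> < 1"
  define \<sigma> where "\<sigma> = (1 + \<rho>) / 2"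
  define C where "C = (\<Sum>n. real n powr d * (\<rho> / \<sigma>) ^ n) / K"
  have \<sigma>: "\<rho> < \<sigma>" "\<sigma> < 1" using \<rho> by (auto simp: \<sigma>_def)
  have "0 \<le> C"
    unfolding C_def using \<rho> \<sigma> K_pos
    by (intro divide_nonneg_pos suminf_nonneg summable_powr_times_geometric) auto
  moreover have "H0_seminorm \<rho> (H0_resolvent (comp_rot r) 1 g) \<le> C * H0_seminorm \<sigma> g"
    if "g \<in> H0" for g
  proof (rule H0_seminorm_le)
    fix z :: complex
    assume "z \<in> cball 0 \<rho>"
    then have "z \<in> ball 0 1" "cmod z \<le> \<rho>" using \<rho> by auto
    then have "cmod (H0_resolvent (comp_rot r) 1 g z)
        \<le> H0_seminorm \<sigma> g / K * (\<Sum>n. real n powr d * (\<rho> / \<sigma>) ^ n)"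
      using cohomological_series_bound(2)[OF that _ \<sigma>] \<rho>
      by (simp only: H0_resolvent_1_eq[OF that] cohomological_solution_def if_True)
    also have "\<dots> = C * H0_seminorm \<sigma> g" by (simp add: C_def)
    finally show "cmod (H0_resolvent (comp_rot r) 1 g z) \<le> C * H0_seminorm \<sigma> g" .
  qed (use \<rho> in simp)
  ultimately show "\<exists>\<sigma> C. 0 \<le> \<sigma> \<and> \<sigma> < 1 \<and> 0 \<le> C \<and>
      (\<forall>g\<in>H0. H0_seminorm \<rho> (H0_resolvent (comp_rot r) 1 g) \<le> C * H0_seminorm \<sigma> g)"
    using \<rho> \<sigma> by (intro exI[of _ \<sigma>] exI[of _ C]) auto
qed

theorem one_in_H0_resolvent_set: "1 \<in> H0_resolvent_set (comp_rot r)"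
  using bij_betw_shift_op_1_comp_rot H0_continuous_resolvent_1
  by (simp add: H0_resolvent_set_def)

end

theorem mainTheorem3:
  fixes x :: real and r :: complex
  assumes "diophantine x"
    and "r = exp (\<i> * complex_of_real (2 * pi * x))"
  shows "1 \<notin> H0_spectrum (comp_rot r)
    \<and> 1 \<in> H0_waelbroeck_spectrum (comp_rot r) - H0_spectrum (comp_rot r)"
proof -
  obtain d K where "0 < K" and "\<And>n. 1 \<le> n \<Longrightarrow> K / real n powr d \<le> cmod (1 - r ^ n)"
    using diophantine_small_divisors[OF assms(1)] unfolding assms(2) by blast
  then interpret small_divisor_rotation r d K
    using assms(2) by unfold_locales simp_all
  have "1 \<notin> H0_spectrum (comp_rot r)"
    using one_in_H0_resolvent_set by (simp add: H0_spectrum_def)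
  moreover have "1 \<in> H0_waelbroeck_spectrum (comp_rot r)"
    unfolding assms(2) by (rule one_in_H0_waelbroeck_spectrum_rotation)
  ultimately show ?thesis by blast
qed

end
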